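(* Consider the evolution equation for a probability density $f(\mathbf{y},t)$, $$\frac{\partial f(\mathbf{y})}{\partial t}=\gamma\Big(\mathbb{M}\big(h^{+}(\cdot,[f])\,f\big)(\mathbf{y})-h^{-}(\mathbf{y},[f])\,f(\mathbf{y})\Big),\qquad \gamma>0,$$ where the mutations are non-positive Gibbs mutations, i.e. the mutation kernel is $$f_{\zeta}(\mathbf{y},\mathbf{y}^{\circ})=\frac{f_{0}(\mathbf{y})\,\Psi(\mathbf{y},\mathbf{y}^{\circ})}{h_{0}^{+}(\mathbf{y}^{\circ})}\,H(\mathbf{y}^{\circ},\mathbf{y}),\qquad h_{0}^{+}(\mathbf{y}^{\circ})=h^{+}(\mathbf{y}^{\circ},[f_{0}]),$$ for a fixed positive probability density $f_0$. The competition relation may be transitive or intransitive, and mixing may be preferential or non-preferential. Then the total entropy $$S([f])=-\int f(\mathbf{y})\ln\!\Big(\frac{f(\mathbf{y})}{f_{0}(\mathbf{y})}\Big)\,d\mathbf{y}+C_{0}([f_0])$$ (with $C_0$ depending only on $f_0$) monotonically increases, $dS/dt\ge 0$, during the evolution of the system until it reaches its maximal value at the equilibrium $f=f_0$.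
   Context: States $\mathbf{y}$ range over a property space with measure $d\mathbf{y}$. A competition relation on states is given: for any two states exactly one of $\mathbf{y}\prec\mathbf{y}'$, $\mathbf{y}\simeq\mathbf{y}'$, $\mathbf{y}\succ\mathbf{y}'$ holds, with $\mathbf{y}\prec\mathbf{y}'$ iff $\mathbf{y}'\succ\mathbf{y}$ and $\simeq$ symmetric (no transitivity is assumed). The generalised Heaviside function is $H(\mathbf{y},\mathbf{y}')=0$ if $\mathbf{y}\prec\mathbf{y}'$, $=1/2$ if $\mathbf{y}\simeq\mathbf{y}'$, $=1$ if $\mathbf{y}\succ\mathbf{y}'$, so $H(\mathbf{y},\mathbf{y}')=1-H(\mathbf{y}',\mathbf{y})$. The mixing preference function $\Psi(\mathbf{y},\mathbf{y}')\in[0,1]$ gives the probability weight of selecting a pair for competition ($\Psi\equiv1$ for non-preferential mixing). Winning and losing capacities: $h^{+}(\mathbf{y},[f])=\int\Psi(\mathbf{y},\mathbf{y}')H(\mathbf{y},\mathbf{y}')f(\mathbf{y}')\,d\mathbf{y}'$, $h^{-}(\mathbf{y},[f])=\int\Psi(\mathbf{y},\mathbf{y}')H(\mathbf{y}',\mathbf{y})f(\mathbf{y}')\,d\mathbf{y}'$. The mutation operator is $\mathbb{M}(g)(\mathbf{y})=\int f_{\zeta}(\mathbf{y},\mathbf{y}^{\circ})g(\mathbf{y}^{\circ})\,d\mathbf{y}^{\circ}$, where $f_\zeta(\cdot,\mathbf{y}^\circ)$ is the normalised distribution of mutations originating at $\mathbf{y}^\circ$; "non-positive" means mutations from $\mathbf{y}^\circ$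 land only at states $\mathbf{y}\preccurlyeq\mathbf{y}^\circ$. *)

theory Defs
  imports "HOL-Analysis.Analysis"
begin

text \<open>Competition relation: lt y y' encodes y \<prec> y'. y \<succ> y' is lt y' y, and
  y \<simeq> y' means neither holds. Asymmetry of lt (assumed in the theorem) gives
  the required trichotomy; no transitivity is assumed.\<close>

definition Hv :: "('a \<Rightarrow> 'a \<Rightarrow> bool) \<Rightarrow> 'a \<Rightarrow> 'a \<Rightarrow> real" where
  "Hv lt y y' = (if lt y y' then 0 else if lt y' y then 1 else 1/2)"

definition hplus :: "'a measure \<Rightarrow> ('a \<Rightarrow> 'a \<Rightarrow> real) \<Rightarrow> ('a \<Rightarrow> 'a \<Rightarrow> bool)
    \<Rightarrow> ('a \<Rightarrow> real) \<Rightarrow> 'a \<Rightarrow> real" where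
  "hplus M \<Psi> lt f y = (\<integral>y'. \<Psi> y y' * Hv lt y y' * f y' \<partial>M)"

definition hminus :: "'a measure \<Rightarrow> ('a \<Rightarrow> 'a \<Rightarrow> real) \<Rightarrow> ('a \<Rightarrow> 'a \<Rightarrow> bool)
    \<Rightarrow> ('a \<Rightarrow> real) \<Rightarrow> 'a \<Rightarrow> real" where
  "hminus M \<Psi> lt f y = (\<integral>y'. \<Psi> y y' * Hv lt y' y * f y' \<partial>M)"

text \<open>Mutation operator with kernel K y y\<degree> (distribution of mutations from y\<degree> to y).\<close>
definition mutation :: "'a measure \<Rightarrow> ('a \<Rightarrow> 'a \<Rightarrow> real) \<Rightarrow> ('a \<Rightarrow> real) \<Rightarrow> 'a \<Rightarrow> real" where
  "mutation M K g y = (\<integral>yo. K y yo * g yo \<partial>M)"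

definition gibbs_kernel :: "'a measure \<Rightarrow> ('a \<Rightarrow> 'a \<Rightarrow> real) \<Rightarrow> ('a \<Rightarrow> 'a \<Rightarrow> bool)
    \<Rightarrow> ('a \<Rightarrow> real) \<Rightarrow> 'a \<Rightarrow> 'a \<Rightarrow> real" where
  "gibbs_kernel M \<Psi> lt f0 y yo = f0 y * \<Psi> y yo / hplus M \<Psi> lt f0 yo * Hv lt yo y"

definition evol_rhs :: "'a measure \<Rightarrow> ('a \<Rightarrow> 'a \<Rightarrow> real) \<Rightarrow> ('a \<Rightarrow> 'a \<Rightarrow> bool)
    \<Rightarrow> ('a \<Rightarrow> real) \<Rightarrow> real \<Rightarrow> ('a \<Rightarrow> real) \<Rightarrow> 'a \<Rightarrow> real" where
  "evol_rhs M \<Psi> lt f0 \<gamma> f y =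
     \<gamma> * (mutation M (gibbs_kernel M \<Psi> lt f0) (\<lambda>yo. hplus M \<Psi> lt f yo * f yo) y
          - hminus M \<Psi> lt f y * f y)"

definition entropy :: "'a measure \<Rightarrow> ('a \<Rightarrow> real) \<Rightarrow> real \<Rightarrow> ('a \<Rightarrow> real) \<Rightarrow> real" where
  "entropy M f0 C0 f = - (\<integral>y. f y * ln (f y / f0 y) \<partial>M) + C0"

definition prob_density :: "'a measure \<Rightarrow> ('a \<Rightarrow> real) \<Rightarrow> bool" where
  "prob_density M f \<longleftrightarrow> f \<in> borel_measurable M \<and> (\<forall>y\<in>space M. 0 \<le> f y)
     \<and> integrable M f \<and> (\<integral>y. f y \<partial>M) = 1"

end

theory Submission
  imports Defs
begin

text \<open>
  The entropy changes at rate dS/dt = -\<integral> (\<partial>f/\<partial>t) (ln (f/f0) + 1). By Fubini, and using the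
  symmetry of \<Psi> for the loss term, both the gain and the loss part of this integral become
  iterated integrals over the parent state y\<degree>. For fixed y\<degree> put w = \<Psi> H(y\<degree>, \<cdot>) f0 and
  u = f/f0: the loss part is \<integral> w u (ln u + 1), and the gain part is the same integral with the
  factor u replaced by the constant h+[f](y\<degree>) / h+[f0](y\<degree>), which is precisely the w-mean of u.
  Since u and ln u + 1 increase together, a Chebyshev (covariance) inequality gives gain \<le> loss,
  hence dS/dt \<ge> 0. Maximality of S at f0 is Gibbs' inequality, and f0 is an equilibrium because
  the Gibbs kernel makes the gain at f0 equal to the loss h-[f0] f0.
\<close>

lemma integrable_mult_bounded:
  fixes g \<phi> :: "'a \<Rightarrow> real"
  assumes "integrable M g" "\<phi> \<in> borel_measurable M" "\<And>y. y \<in> space M \<Longrightarrow> \<bar>\<phi> y\<bar> \<le> B"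
  shows "integrable M (\<lambda>y. \<phi> y * g y)"
proof (rule Bochner_Integration.integrable_bound[where f="\<lambda>y. B * g y"])
  show "integrable M (\<lambda>y. B * g y)" using assms(1) by simp
  show "(\<lambda>y. \<phi> y * g y) \<in> borel_measurable M" using assms(1,2) by measurable
  show "AE y in M. norm (\<phi> y * g y) \<le> norm (B * g y)"
  proof (rule AE_I2)
    fix y assume "y \<in> space M"
    then have "\<bar>\<phi> y\<bar> \<le> \<bar>B\<bar>" using assms(3) by force
    then show "norm (\<phi> y * g y) \<le> norm (B * g y)" by (simp add: abs_mult mult_right_mono)
  qed
qed

lemma chebyshev_ln_integral_le:
  fixes w u :: "'a \<Rightarrow> real"
  assumes w_nonneg: "\<And>y. y \<in> space M \<Longrightarrow> 0 \<le> w y"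
    and u_pos: "\<And>y. y \<in> space M \<Longrightarrow> 0 < u y"
    and "integrable M w" "integrable M (\<lambda>y. w y * u y)"
    and "integrable M (\<lambda>y. w y * (ln (u y) + 1))" "integrable M (\<lambda>y. w y * u y * (ln (u y) + 1))"
    and mean: "(\<integral>y. w y * u y \<partial>M) = m * (\<integral>y. w y \<partial>M)" and "0 < m"
  shows "m * (\<integral>y. w y * (ln (u y) + 1) \<partial>M) \<le> (\<integral>y. w y * u y * (ln (u y) + 1) \<partial>M)"
proof -
  \<comment> \<open>integrate w (u - m) (ln u - ln m) \<ge> 0; the terms carrying ln m + 1 cancel by the mean condition\<close>
  have "0 \<le> (\<integral>y. w y * u y * (ln (u y) + 1) - m * (w y * (ln (u y) + 1))
             - (ln m + 1) * (w y * u y) + (m * (ln m + 1)) * w y \<partial>M)"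
  proof (intro Bochner_Integration.integral_nonneg)
    fix y assume y: "y \<in> space M"
    have "0 \<le> (u y - m) * (ln (u y) - ln m)"
      using u_pos[OF y] \<open>0 < m\<close>
      by (cases "u y \<le> m") (auto intro: mult_nonpos_nonpos mult_nonneg_nonneg)
    then have "0 \<le> w y * ((u y - m) * (ln (u y) - ln m))" using w_nonneg[OF y] by simp
    then show "0 \<le> w y * u y * (ln (u y) + 1) - m * (w y * (ln (u y) + 1))
             - (ln m + 1) * (w y * u y) + (m * (ln m + 1)) * w y"
      by (simp add: algebra_simps)
  qed
  also have "\<dots> = (\<integral>y. w y * u y * (ln (u y) + 1) \<partial>M) - m * (\<integral>y. w y * (ln (u y) + 1) \<partial>M)
             - (ln m + 1) * (\<integral>y. w y * u y \<partial>M) + (m * (ln m + 1)) * (\<integral>y. w y \<partial>M)"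
    using assms(3-6) by simp
  also have "\<dots> = (\<integral>y. w y * u y * (ln (u y) + 1) \<partial>M) - m * (\<integral>y. w y * (ln (u y) + 1) \<partial>M)"
    unfolding mean by (simp add: algebra_simps)
  finally show ?thesis by simp
qed

lemma diff_le_mult_ln_div:
  fixes a b :: real
  assumes "0 \<le> a" "0 < b"
  shows "a - b \<le> a * ln (a / b)"
proof (cases "a = 0")
  case False
  then have "0 < a" using assms by simp
  have "ln (b / a) \<le> b / a - 1" using \<open>0 < a\<close> \<open>0 < b\<close> by (intro ln_le_minus_one) simp
  then have "a * (1 - b / a) \<le> a * ln (a / b)"
    using \<open>0 < a\<close> \<open>0 < b\<close> by (intro mult_left_mono) (auto simp: ln_div)
  moreover have "a * (1 - b / a) = a - b" using \<open>0 < a\<close> by (simp add: field_simps)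
  ultimately show ?thesis by simp
qed (use assms in simp)

lemma has_real_derivative_mult_ln_div:
  assumes "(\<phi> has_real_derivative \<phi>') (at s)" "0 < \<phi> s" "0 < c"
  shows "((\<lambda>x. \<phi> x * ln (\<phi> x / c)) has_real_derivative \<phi>' * (ln (\<phi> s / c) + 1)) (at s)"
  using assms by (auto intro!: derivative_eq_intros simp: field_simps)

lemma mono_on_if_deriv_nonneg:
  fixes g :: "real \<Rightarrow> real"
  assumes "is_interval T"
    and deriv: "\<And>t. t \<in> T \<Longrightarrow> \<exists>D. (g has_real_derivative D) (at t) \<and> 0 \<le> D"
  shows "mono_on T g"
proof (rule mono_onI)
  fix r s assume "r \<in> T" "s \<in> T" "r \<le> s"
  then show "g r \<le> g s"
    using assms(1) deriv unfolding is_interval_1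
    by (intro DERIV_nonneg_imp_nondecreasing[OF \<open>r \<le> s\<close>]) blast
qed

lemma integral_dominated_convergence_at:
  fixes Q :: "'b::metric_space \<Rightarrow> 'a \<Rightarrow> real"
  assumes "0 < d" "integrable M g"
    and Q_meas: "\<And>s. s \<in> ball t d \<Longrightarrow> Q s \<in> borel_measurable M"
    and Q_lim: "\<And>y. y \<in> space M \<Longrightarrow> ((\<lambda>s. Q s y) \<longlongrightarrow> L y) (at t)"
    and Q_bound: "\<And>s y. s \<in> ball t d \<Longrightarrow> y \<in> space M \<Longrightarrow> \<bar>Q s y\<bar> \<le> g y"
  shows "((\<lambda>s. \<integral>y. Q s y \<partial>M) \<longlongrightarrow> (\<integral>y. L y \<partial>M)) (at t)"
  unfolding tendsto_at_iff_sequentially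
proof (intro allI impI)
  fix X :: "nat \<Rightarrow> 'b" assume X: "\<forall>i. X i \<in> UNIV - {t}" "X \<longlonglongrightarrow> t"
  obtain N where N: "\<And>n. n \<ge> N \<Longrightarrow> dist (X n) t < d"
    using X(2) \<open>0 < d\<close> unfolding lim_sequentially by blast
  define Y where "Y n = X (n + N)" for n
  have Y_ball: "Y n \<in> ball t d" for n using N[of "n + N"] by (simp add: Y_def dist_commute)
  have Y_lim: "\<And>y. y \<in> space M \<Longrightarrow> (\<lambda>n. Q (Y n) y) \<longlonglongrightarrow> L y"
    using Q_lim X LIMSEQ_ignore_initial_segment[OF X(2), of N]
    unfolding tendsto_at_iff_sequentially comp_def Y_def by simp
  have "L \<in> borel_measurable M"
    using Y_lim Q_meas[OF Y_ball] by (rule borel_measurable_LIMSEQ_real)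
  then have "(\<lambda>n. \<integral>y. Q (Y n) y \<partial>M) \<longlonglongrightarrow> (\<integral>y. L y \<partial>M)"
    using Q_meas[OF Y_ball] \<open>integrable M g\<close> Y_lim Q_bound[OF Y_ball]
    by (intro integral_dominated_convergence[where w=g]) (auto intro: AE_I2)
  then show "((\<lambda>s. \<integral>y. Q s y \<partial>M) \<circ> X) \<longlonglongrightarrow> (\<integral>y. L y \<partial>M)"
    unfolding Y_def comp_def by (rule LIMSEQ_offset)
qed

lemma has_real_derivative_integral:
  fixes F F' :: "real \<Rightarrow> 'a \<Rightarrow> real"
  assumes "open T" "t \<in> T"
    and F_int: "\<And>s. s \<in> T \<Longrightarrow> integrable M (F s)"
    and F_deriv: "\<And>s y. s \<in> T \<Longrightarrow> y \<in> space M \<Longrightarrow> ((\<lambda>s. F s y) has_real_derivative F' s y) (at s)"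
    and "integrable M g" "0 < e"
    and F'_bound: "\<And>s y. s \<in> T \<Longrightarrow> \<bar>s - t\<bar> < e \<Longrightarrow> y \<in> space M \<Longrightarrow> \<bar>F' s y\<bar> \<le> g y"
  shows "((\<lambda>s. \<integral>y. F s y \<partial>M) has_real_derivative (\<integral>y. F' t y \<partial>M)) (at t)"
proof -
  obtain d where d: "0 < d" "d \<le> e" "ball t d \<subseteq> T"
    using \<open>open T\<close> \<open>t \<in> T\<close> \<open>0 < e\<close> open_contains_ball
    by (metis dual_order.trans min.cobounded1 min.cobounded2 min_def subset_ball)
  define Q where "Q s y = (F s y - F t y) / (s - t)" for s y
  have "norm (F s y - F t y) \<le> g y * norm (s - t)" if "s \<in> ball t d" "y \<in> space M" for s y
  proof (rule field_differentiable_bound[of "ball t d"])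
    show "((\<lambda>s. F s y) has_field_derivative F' z y) (at z within ball t d)" if "z \<in> ball t d" for z
      using F_deriv[of z y] \<open>y \<in> space M\<close> that d(3) by (blast intro: has_field_derivative_at_within)
    show "norm (F' z y) \<le> g y" if "z \<in> ball t d" for z
      using F'_bound[of z y] \<open>y \<in> space M\<close> that d by (auto simp: dist_real_def)
  qed (use that d in auto)
  then have Q_bound: "\<bar>Q s y\<bar> \<le> g y" if "s \<in> ball t d" "y \<in> space M" for s y
    using that F'_bound[of t y] \<open>t \<in> T\<close> \<open>0 < e\<close>
    by (cases "s = t") (auto simp: Q_def abs_divide divide_le_eq)
  have "((\<lambda>s. \<integral>y. Q s y \<partial>M) \<longlongrightarrow> (\<integral>y. F' t y \<partial>M)) (at t)"
  proof (rule integral_dominated_convergence_at[OF \<open>0 < d\<close> \<open>integrable M g\<close> _ _ Q_bound])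
    show "Q s \<in> borel_measurable M" if "s \<in> ball t d" for s
      using F_int that d(3) \<open>t \<in> T\<close> unfolding Q_def by (auto intro!: borel_measurable_divide)
    show "((\<lambda>s. Q s y) \<longlongrightarrow> F' t y) (at t)" if "y \<in> space M" for y
      using F_deriv[OF \<open>t \<in> T\<close> that] unfolding has_field_derivative_iff Q_def .
  qed
  moreover have "\<forall>\<^sub>F s in at t. (\<integral>y. Q s y \<partial>M) = ((\<integral>y. F s y \<partial>M) - (\<integral>y. F t y \<partial>M)) / (s - t)"
    using eventually_at_in_open[OF \<open>open T\<close> \<open>t \<in> T\<close>]
    by eventually_elim (simp add: Q_def F_int \<open>t \<in> T\<close>)
  ultimately show ?thesis
    unfolding has_field_derivative_iff by (rule tendsto_cong[THEN iffD1, rotated])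
qed

lemma (in pair_sigma_finite) integrable_nonneg_kernel_mult:
  fixes k :: "'a \<Rightarrow> 'b \<Rightarrow> real" and \<phi> :: "'a \<Rightarrow> real"
  assumes "(\<lambda>(x, y). k x y * \<phi> x) \<in> borel_measurable (M1 \<Otimes>\<^sub>M M2)"
    and k_nonneg: "\<And>x y. x \<in> space M1 \<Longrightarrow> y \<in> space M2 \<Longrightarrow> 0 \<le> k x y"
    and k_int: "AE x in M1. integrable M2 (k x)"
    and "integrable M1 (\<lambda>x. (\<integral>y. k x y \<partial>M2) * \<bar>\<phi> x\<bar>)"
  shows "integrable (M1 \<Otimes>\<^sub>M M2) (\<lambda>(x, y). k x y * \<phi> x)"
proof (rule Fubini_integrable)
  have "(\<integral>y. norm (k x y * \<phi> x) \<partial>M2) = (\<integral>y. k x y \<partial>M2) * \<bar>\<phi> x\<bar>" if "x \<in> space M1" for x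
    unfolding integral_mult_left_zero[symmetric]
    using k_nonneg[OF that] by (intro Bochner_Integration.integral_cong) (auto simp: abs_mult)
  then show "integrable M1 (\<lambda>x. \<integral>y. norm ((\<lambda>(x, y). k x y * \<phi> x) (x, y)) \<partial>M2)"
    using assms(4) by (simp cong: Bochner_Integration.integrable_cong)
  show "AE x in M1. integrable M2 (\<lambda>y. (\<lambda>(x, y). k x y * \<phi> x) (x, y))"
    using k_int by eventually_elim simp
qed fact

locale gibbs_mutation =
  fixes M :: "'a measure" and lt :: "'a \<Rightarrow> 'a \<Rightarrow> bool" and \<Psi> :: "'a \<Rightarrow> 'a \<Rightarrow> real"
    and f0 :: "'a \<Rightarrow> real"
  assumes M_sigma_finite: "sigma_finite_measure M"
    and lt_meas: "{p \<in> space (M \<Otimes>\<^sub>M M). lt (fst p) (snd p)} \<in> sets (M \<Otimes>\<^sub>M M)"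
    and Psi_meas: "(\<lambda>p. \<Psi> (fst p) (snd p)) \<in> borel_measurable (M \<Otimes>\<^sub>M M)"
    and Psi_range: "\<And>y y'. y \<in> space M \<Longrightarrow> y' \<in> space M \<Longrightarrow> 0 \<le> \<Psi> y y' \<and> \<Psi> y y' \<le> 1"
    and Psi_sym: "\<And>y y'. y \<in> space M \<Longrightarrow> y' \<in> space M \<Longrightarrow> \<Psi> y y' = \<Psi> y' y"
    and f0_dens: "prob_density M f0"
    and f0_pos: "\<And>y. y \<in> space M \<Longrightarrow> 0 < f0 y"
    and h0_pos: "\<And>y. y \<in> space M \<Longrightarrow> 0 < hplus M \<Psi> lt f0 y"
begin

interpretation P: pair_sigma_finite M M
  by (simp add: pair_sigma_finite_def M_sigma_finite)

lemma Hv_measurable_pair: "(\<lambda>p. Hv lt (fst p) (snd p)) \<in> borel_measurable (M \<Otimes>\<^sub>M M)"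
proof -
  have "(\<lambda>p. (snd p, fst p)) \<in> measurable (M \<Otimes>\<^sub>M M) (M \<Otimes>\<^sub>M M)" by measurable
  from measurable_sets[OF this lt_meas]
  have "{p \<in> space (M \<Otimes>\<^sub>M M). lt (snd p) (fst p)} \<in> sets (M \<Otimes>\<^sub>M M)"
    by (rule back_subst) (auto simp: space_pair_measure)
  with lt_meas show ?thesis
    unfolding Hv_def by (intro measurable_If) (auto simp: pred_def)
qed

lemma Hv_measurable[measurable (raw)]:
  "f \<in> measurable N M \<Longrightarrow> g \<in> measurable N M \<Longrightarrow> (\<lambda>x. Hv lt (f x) (g x)) \<in> borel_measurable N"
  using measurable_compose[OF measurable_Pair Hv_measurable_pair] by simp

lemma Psi_measurable[measurable (raw)]:
  "f \<in> measurable N M \<Longrightarrow> g \<in> measurable N M \<Longrightarrow> (\<lambda>x. \<Psi> (f x) (g x)) \<in> borel_measurable N"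
  using measurable_compose[OF measurable_Pair Psi_meas] by simp

lemma f0_measurable[measurable]: "f0 \<in> borel_measurable M"
  and f0_integrable: "integrable M f0"
  using f0_dens by (simp_all add: prob_density_def)

lemma hplus_measurable[measurable]:
  assumes [measurable]: "f \<in> borel_measurable M"
  shows "hplus M \<Psi> lt f \<in> borel_measurable M"
  unfolding hplus_def[abs_def] by measurable

lemma hminus_measurable[measurable]:
  assumes [measurable]: "f \<in> borel_measurable M"
  shows "hminus M \<Psi> lt f \<in> borel_measurable M"
  unfolding hminus_def[abs_def] by measurable

lemma Psi_Hv_nonneg: "y \<in> space M \<Longrightarrow> y' \<in> space M \<Longrightarrow> 0 \<le> \<Psi> y y' * Hv lt a b"
  using Psi_range[of y y'] by (auto simp: Hv_def)

lemma Psi_Hv_le_1: "y \<in> space M \<Longrightarrow> y' \<in> space M \<Longrightarrow> \<Psi> y y' * Hv lt a b \<le> 1"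
  using Psi_range[of y y'] by (auto simp: Hv_def)

lemma integrable_Psi_Hv_mult:
  assumes "integrable M g" "y \<in> space M" "a \<in> space M"
  shows "integrable M (\<lambda>y'. \<Psi> a y' * Hv lt y y' * g y')"
    and "integrable M (\<lambda>y'. \<Psi> a y' * Hv lt y' y * g y')"
    and "integrable M (\<lambda>y'. \<Psi> y' a * Hv lt y y' * g y')"
  using assms Psi_Hv_nonneg Psi_Hv_le_1
  by (auto intro!: integrable_mult_bounded[where B=1])

lemma integral_Psi_Hv_eq_hplus:
  "yo \<in> space M \<Longrightarrow> (\<integral>y. \<Psi> y yo * Hv lt yo y * g y \<partial>M) = hplus M \<Psi> lt g yo"
  unfolding hplus_def by (rule Bochner_Integration.integral_cong) (auto simp: Psi_sym)

context
  fixes f assumes f_dens: "prob_density M f" and f_pos: "\<And>y. y \<in> space M \<Longrightarrow> 0 < f y"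
begin

lemma f_measurable[measurable]: "f \<in> borel_measurable M"
  and f_integrable: "integrable M f" and integral_f: "(\<integral>y. f y \<partial>M) = 1"
  using f_dens by (auto simp: prob_density_def)

lemma hplus_hminus_bounds:
  assumes "y \<in> space M"
  shows "0 \<le> hplus M \<Psi> lt f y" "hplus M \<Psi> lt f y \<le> 1"
    and "0 \<le> hminus M \<Psi> lt f y" "hminus M \<Psi> lt f y \<le> 1"
proof -
  have "0 \<le> \<Psi> y y' * Hv lt a b * f y'" "\<Psi> y y' * Hv lt a b * f y' \<le> f y'"
    if "y' \<in> space M" for y' a b
    using Psi_Hv_nonneg[OF assms that, of a b] Psi_Hv_le_1[OF assms that, of a b] f_pos[OF that]
    by (auto intro: mult_left_le_one_le)
  then show "0 \<le> hplus M \<Psi> lt f y" "hplus M \<Psi> lt f y \<le> 1"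
    and "0 \<le> hminus M \<Psi> lt f y" "hminus M \<Psi> lt f y \<le> 1"
    unfolding hplus_def hminus_def integral_f[symmetric]
    by (auto intro!: Bochner_Integration.integral_nonneg Bochner_Integration.integral_mono
        integrable_Psi_Hv_mult f_integrable assms)
qed

lemma hplus_pos:
  assumes y: "y \<in> space M"
  shows "0 < hplus M \<Psi> lt f y"
proof (rule ccontr)
  assume "\<not> 0 < hplus M \<Psi> lt f y"
  with hplus_hminus_bounds[OF y] have "hplus M \<Psi> lt f y = 0" by simp
  then have "AE y' in M. \<Psi> y y' * Hv lt y y' * f y' = 0"
    unfolding hplus_def using y f_pos
    by (subst (asm) integral_nonneg_eq_0_iff_AE)
       (auto intro!: integrable_Psi_Hv_mult f_integrable AE_I2 mult_nonneg_nonneg Psi_Hv_nonneg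
        simp: less_imp_le)
  then have "AE y' in M. \<Psi> y y' * Hv lt y y' * f0 y' = 0"
    using AE_space by eventually_elim (use f_pos in force)
  then have "hplus M \<Psi> lt f0 y = 0"
    unfolding hplus_def by (simp add: integral_eq_zero_AE)
  with h0_pos[OF y] show False by simp
qed

abbreviation "ent_grad y \<equiv> ln (f y / f0 y) + 1"
abbreviation "gain y \<equiv> mutation M (gibbs_kernel M \<Psi> lt f0) (\<lambda>yo. hplus M \<Psi> lt f yo * f yo) y"
abbreviation "gain_rate yo \<equiv> hplus M \<Psi> lt f yo * f yo / hplus M \<Psi> lt f0 yo"
abbreviation "gain_kernel y yo \<equiv> \<Psi> y yo * Hv lt yo y * f0 y * gain_rate yo"

lemma gain_eq_integral: "gain y = (\<integral>yo. gain_kernel y yo \<partial>M)"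
  unfolding mutation_def gibbs_kernel_def
  by (rule Bochner_Integration.integral_cong) (simp_all add: mult_ac)

lemma gain_kernel_nonneg:
  assumes "y \<in> space M" "yo \<in> space M"
  shows "0 \<le> gain_kernel y yo"
proof -
  have "0 \<le> gain_rate yo"
    using hplus_hminus_bounds(1)[of yo] f_pos[of yo] h0_pos[of yo] assms by simp
  then show ?thesis
    using Psi_Hv_nonneg[OF assms, of yo y] f0_pos[of y] assms
    by (metis less_imp_le mult_nonneg_nonneg times_divide_eq_right)
qed

lemma integrable_gain_kernel: "integrable (M \<Otimes>\<^sub>M M) (\<lambda>(yo, y). gain_kernel y yo)"
proof (rule P.integrable_nonneg_kernel_mult[where k="\<lambda>yo y. \<Psi> y yo * Hv lt yo y * f0 y"])
  have "integrable M (\<lambda>yo. hplus M \<Psi> lt f yo * f yo)"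
    using hplus_hminus_bounds by (intro integrable_mult_bounded[where B=1] f_integrable) auto
  then show "integrable M (\<lambda>yo. (\<integral>y. \<Psi> y yo * Hv lt yo y * f0 y \<partial>M) * \<bar>gain_rate yo\<bar>)"
  proof (rule Bochner_Integration.integrable_cong[OF refl, THEN iffD2, rotated])
    fix yo assume "yo \<in> space M"
    then show "(\<integral>y. \<Psi> y yo * Hv lt yo y * f0 y \<partial>M) * \<bar>gain_rate yo\<bar> = hplus M \<Psi> lt f yo * f yo"
      using h0_pos[of yo] hplus_hminus_bounds(1)[of yo] f_pos[of yo]
      by (simp add: integral_Psi_Hv_eq_hplus abs_mult)
  qed
qed (auto intro!: AE_I2 integrable_Psi_Hv_mult f0_integrable mult_nonneg_nonneg Psi_Hv_nonneg
    simp: f0_pos less_imp_le)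

lemma AE_integrable_gain_kernel: "AE y in M. integrable M (\<lambda>yo. gain_kernel y yo)"
  using P.AE_integrable_fst[where f="\<lambda>y yo. gain_kernel y yo"] P.integrable_product_swap[OF integrable_gain_kernel]
  by (simp add: case_prod_beta')

lemma integrable_gain_kernel_mult:
  assumes "integrable M (\<lambda>y. gain y * \<phi> y)" "\<phi> \<in> borel_measurable M"
  shows "integrable (M \<Otimes>\<^sub>M M) (\<lambda>(y, yo). gain_kernel y yo * \<phi> y)"
proof (rule P.integrable_nonneg_kernel_mult)
  have "gain y \<ge> 0" if "y \<in> space M" for y
    unfolding gain_eq_integral using that by (intro Bochner_Integration.integral_nonneg gain_kernel_nonneg)
  then show "integrable M (\<lambda>y. (\<integral>yo. gain_kernel y yo \<partial>M) * \<bar>\<phi> y\<bar>)"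
    unfolding gain_eq_integral[symmetric] using integrable_abs[OF assms(1)]
    by (simp add: abs_mult cong: Bochner_Integration.integrable_cong)
qed (use assms(2) AE_integrable_gain_kernel gain_kernel_nonneg in auto)

lemma integrable_loss_kernel_mult:
  assumes "integrable M \<phi>"
  shows "integrable (M \<Otimes>\<^sub>M M) (\<lambda>(y, yo). \<Psi> y yo * Hv lt yo y * f yo * \<phi> y)"
proof (rule P.integrable_nonneg_kernel_mult)
  have [measurable]: "\<phi> \<in> borel_measurable M" using assms by (rule borel_measurable_integrable)
  show "(\<lambda>(y, yo). \<Psi> y yo * Hv lt yo y * f yo * \<phi> y) \<in> borel_measurable (M \<Otimes>\<^sub>M M)" by measurable
  have "integrable M (\<lambda>y. hminus M \<Psi> lt f y * \<bar>\<phi> y\<bar>)"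
    using hplus_hminus_bounds(3,4) assms by (intro integrable_mult_bounded[where B=1]) auto
  then show "integrable M (\<lambda>y. (\<integral>yo. \<Psi> y yo * Hv lt yo y * f yo \<partial>M) * \<bar>\<phi> y\<bar>)"
    unfolding hminus_def .
qed (auto intro!: AE_I2 integrable_Psi_Hv_mult f_integrable mult_nonneg_nonneg Psi_Hv_nonneg
    simp: f_pos less_imp_le)

lemma integral_gain_kernel_le_loss_kernel:
  assumes yo: "yo \<in> space M"
    and gain_int: "integrable M (\<lambda>y. gain_kernel y yo * ent_grad y)"
    and loss_int: "integrable M (\<lambda>y. \<Psi> y yo * Hv lt yo y * f yo * (f y * ent_grad y))"
  shows "(\<integral>y. gain_kernel y yo * ent_grad y \<partial>M)
    \<le> (\<integral>y. \<Psi> y yo * Hv lt yo y * f yo * (f y * ent_grad y) \<partial>M)"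
proof -
  define w where "w y = \<Psi> y yo * Hv lt yo y * f0 y" for y
  define u where "u y = f y / f0 y" for y
  define m where "m = hplus M \<Psi> lt f yo / hplus M \<Psi> lt f0 yo"
  have "0 < m" "0 < f yo" using hplus_pos[OF yo] h0_pos[OF yo] f_pos[OF yo] by (auto simp: m_def)
  have gain_eq: "gain_kernel y yo * ent_grad y = f yo * m * (w y * (ln (u y) + 1))" for y
    by (simp add: w_def u_def m_def)
  have loss_eq: "\<Psi> y yo * Hv lt yo y * f yo * (f y * ent_grad y) = f yo * (w y * u y * (ln (u y) + 1))"
    and wu_eq: "w y * u y = \<Psi> y yo * Hv lt yo y * f y" if "y \<in> space M" for y
    using f0_pos[OF that] by (simp_all add: w_def u_def)
  have "m * (\<integral>y. w y * (ln (u y) + 1) \<partial>M) \<le> (\<integral>y. w y * u y * (ln (u y) + 1) \<partial>M)"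
  proof (rule chebyshev_ln_integral_le)
    show "integrable M w"
      unfolding w_def by (rule integrable_Psi_Hv_mult(3)[OF f0_integrable yo yo])
    show "integrable M (\<lambda>y. w y * u y)"
      using integrable_Psi_Hv_mult(3)[OF f_integrable yo yo]
      by (simp add: wu_eq cong: Bochner_Integration.integrable_cong)
    show "integrable M (\<lambda>y. w y * (ln (u y) + 1))"
      using gain_int \<open>0 < m\<close> \<open>0 < f yo\<close> unfolding gain_eq by simp
    show "integrable M (\<lambda>y. w y * u y * (ln (u y) + 1))"
      using loss_int \<open>0 < f yo\<close> by (simp add: loss_eq cong: Bochner_Integration.integrable_cong)
    have "(\<integral>y. w y * u y \<partial>M) = hplus M \<Psi> lt f yo"
      using yo by (simp add: wu_eq integral_Psi_Hv_eq_hplus cong: Bochner_Integration.integral_cong)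
    then show "(\<integral>y. w y * u y \<partial>M) = m * (\<integral>y. w y \<partial>M)"
      using h0_pos[OF yo] yo by (simp add: w_def m_def integral_Psi_Hv_eq_hplus)
    show "0 \<le> w y" if "y \<in> space M" for y
      using Psi_Hv_nonneg[OF that yo, of yo y] f0_pos[OF that] by (simp add: w_def)
    show "0 < u y" if "y \<in> space M" for y
      using f0_pos[OF that] f_pos[OF that] by (simp add: u_def)
  qed (rule \<open>0 < m\<close>)
  then have "f yo * m * (\<integral>y. w y * (ln (u y) + 1) \<partial>M)
      \<le> f yo * (\<integral>y. w y * u y * (ln (u y) + 1) \<partial>M)"
    using \<open>0 < f yo\<close> by (simp add: mult.assoc)
  moreover have "(\<integral>y. \<Psi> y yo * Hv lt yo y * f yo * (f y * ent_grad y) \<partial>M)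
      = f yo * (\<integral>y. w y * u y * (ln (u y) + 1) \<partial>M)"
    by (simp add: loss_eq cong: Bochner_Integration.integral_cong)
  ultimately show ?thesis unfolding gain_eq by simp
qed

lemma integral_gain_le_loss:
  assumes gain_int: "integrable M (\<lambda>y. gain y * ent_grad y)"
    and ent_int: "integrable M (\<lambda>y. f y * ent_grad y)"
  shows "(\<integral>y. gain y * ent_grad y \<partial>M) \<le> (\<integral>y. hminus M \<Psi> lt f y * (f y * ent_grad y) \<partial>M)"
proof -
  let ?G = "\<lambda>y yo. gain_kernel y yo * ent_grad y"
  let ?L = "\<lambda>y yo. \<Psi> y yo * Hv lt yo y * f yo * (f y * ent_grad y)"
  have G: "integrable (M \<Otimes>\<^sub>M M) (\<lambda>(y, yo). ?G y yo)"
    using gain_int by (rule integrable_gain_kernel_mult) measurable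
  have L: "integrable (M \<Otimes>\<^sub>M M) (\<lambda>(y, yo). ?L y yo)"
    using ent_int by (rule integrable_loss_kernel_mult)
  have "(\<integral>y. gain y * ent_grad y \<partial>M) = (\<integral>yo. \<integral>y. ?G y yo \<partial>M \<partial>M)"
    unfolding gain_eq_integral integral_mult_left_zero[symmetric] by (rule P.Fubini_integral[OF G, symmetric])
  also have "\<dots> \<le> (\<integral>yo. \<integral>y. ?L y yo \<partial>M \<partial>M)"
  proof (rule integral_mono_AE[OF P.integrable_snd[OF G] P.integrable_snd[OF L]])
    show "AE yo in M. (\<integral>y. ?G y yo \<partial>M) \<le> (\<integral>y. ?L y yo \<partial>M)"
      using P.AE_integrable_snd[OF G] P.AE_integrable_snd[OF L] AE_space
      by eventually_elim (rule integral_gain_kernel_le_loss_kernel)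
  qed
  also have "\<dots> = (\<integral>y. hminus M \<Psi> lt f y * (f y * ent_grad y) \<partial>M)"
    unfolding hminus_def integral_mult_left_zero[symmetric] by (rule P.Fubini_integral[OF L])
  finally show ?thesis .
qed

lemma evol_rhs_measurable: "evol_rhs M \<Psi> lt f0 \<gamma> f \<in> borel_measurable M"
  unfolding evol_rhs_def[abs_def] gain_eq_integral by measurable

lemma integral_evol_rhs_ent_grad_nonpos:
  assumes "0 < \<gamma>"
    and rhs_int: "integrable M (\<lambda>y. evol_rhs M \<Psi> lt f0 \<gamma> f y * ent_grad y)"
    and ent_int: "integrable M (\<lambda>y. f y * ln (f y / f0 y))"
  shows "(\<integral>y. evol_rhs M \<Psi> lt f0 \<gamma> f y * ent_grad y \<partial>M) \<le> 0"
proof -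
  have f_ent_int: "integrable M (\<lambda>y. f y * ent_grad y)"
    using Bochner_Integration.integrable_add[OF ent_int f_integrable] by (simp add: distrib_left)
  have loss_int: "integrable M (\<lambda>y. hminus M \<Psi> lt f y * (f y * ent_grad y))"
    using hplus_hminus_bounds(3,4) by (intro integrable_mult_bounded[where B=1] f_ent_int) auto
  have rhs_eq: "evol_rhs M \<Psi> lt f0 \<gamma> f y * ent_grad y
      = \<gamma> * (gain y * ent_grad y - hminus M \<Psi> lt f y * (f y * ent_grad y))" for y
    unfolding evol_rhs_def by (simp add: algebra_simps)
  have "integrable M (\<lambda>y. gain y * ent_grad y)"
    using Bochner_Integration.integrable_add[OF integrable_mult_right[OF rhs_int, of "1 / \<gamma>"] loss_int]
      \<open>0 < \<gamma>\<close> by (simp add: rhs_eq)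
  then show ?thesis
    using integral_gain_le_loss[OF _ f_ent_int] loss_int \<open>0 < \<gamma>\<close>
    by (simp add: rhs_eq mult_nonneg_nonpos)
qed

end

lemma entropy_has_nonneg_derivative:
  fixes f :: "real \<Rightarrow> 'a \<Rightarrow> real"
  assumes "0 < \<gamma>" "open T" "t \<in> T"
    and f_dens: "\<And>s. s \<in> T \<Longrightarrow> prob_density M (f s)"
    and f_pos: "\<And>s y. s \<in> T \<Longrightarrow> y \<in> space M \<Longrightarrow> 0 < f s y"
    and f_evol: "\<And>s y. s \<in> T \<Longrightarrow> y \<in> space M \<Longrightarrow>
        ((\<lambda>s. f s y) has_real_derivative evol_rhs M \<Psi> lt f0 \<gamma> (f s) y) (at s)"
    and ent_int: "\<And>s. s \<in> T \<Longrightarrow> integrable M (\<lambda>y. f s y * ln (f s y / f0 y))"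
    and "0 < e" "integrable M g"
    and dom: "\<And>s y. s \<in> T \<Longrightarrow> \<bar>s - t\<bar> < e \<Longrightarrow> y \<in> space M \<Longrightarrow>
        \<bar>evol_rhs M \<Psi> lt f0 \<gamma> (f s) y * (ln (f s y / f0 y) + 1)\<bar> \<le> g y"
  shows "\<exists>D. ((\<lambda>s. entropy M f0 C0 (f s)) has_real_derivative D) (at t) \<and> 0 \<le> D"
proof -
  define R where "R s y = evol_rhs M \<Psi> lt f0 \<gamma> (f s) y * (ln (f s y / f0 y) + 1)" for s y
  have "((\<lambda>s. f s y * ln (f s y / f0 y)) has_real_derivative R s y) (at s)"
    if "s \<in> T" "y \<in> space M" for s y
    unfolding R_def using f_evol[OF that] f_pos[OF that] f0_pos[OF that(2)]
    by (rule has_real_derivative_mult_ln_div)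
  with \<open>open T\<close> \<open>t \<in> T\<close> ent_int
  have "((\<lambda>s. \<integral>y. f s y * ln (f s y / f0 y) \<partial>M) has_real_derivative (\<integral>y. R t y \<partial>M)) (at t)"
    using \<open>integrable M g\<close> \<open>0 < e\<close> dom unfolding R_def
    by (rule has_real_derivative_integral)
  then have deriv: "((\<lambda>s. entropy M f0 C0 (f s)) has_real_derivative - (\<integral>y. R t y \<partial>M)) (at t)"
    unfolding entropy_def by (auto intro!: derivative_eq_intros)
  have "integrable M (R t)"
  proof (rule Bochner_Integration.integrable_bound[OF \<open>integrable M g\<close>])
    have [measurable]: "f t \<in> borel_measurable M"
      using f_dens[OF \<open>t \<in> T\<close>] unfolding prob_density_def by blast
    note [measurable] = evol_rhs_measurable[OF f_dens[OF \<open>t \<in> T\<close>] f_pos[OF \<open>t \<in> T\<close>]]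
    show "R t \<in> borel_measurable M" unfolding R_def[abs_def] by measurable
    show "AE y in M. norm (R t y) \<le> norm (g y)"
    proof (rule AE_I2)
      fix y assume "y \<in> space M"
      then have "\<bar>R t y\<bar> \<le> g y" using dom[OF \<open>t \<in> T\<close>] \<open>0 < e\<close> by (simp add: R_def)
      then show "norm (R t y) \<le> norm (g y)" by simp
    qed
  qed
  then have "(\<integral>y. R t y \<partial>M) \<le> 0"
    unfolding R_def
    using integral_evol_rhs_ent_grad_nonpos[OF f_dens[OF \<open>t \<in> T\<close>] f_pos[OF \<open>t \<in> T\<close>]
          \<open>0 < \<gamma>\<close> _ ent_int[OF \<open>t \<in> T\<close>]] by blast
  with deriv show ?thesis by auto
qed

end

lemma evol_rhs_reference_eq_0:
  assumes "\<And>yo. yo \<in> space M \<Longrightarrow> hplus M \<Psi> lt f0 yo \<noteq> 0"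
  shows "evol_rhs M \<Psi> lt f0 \<gamma> f0 y = 0"
proof -
  have "mutation M (gibbs_kernel M \<Psi> lt f0) (\<lambda>yo. hplus M \<Psi> lt f0 yo * f0 yo) y
      = (\<integral>yo. f0 y * (\<Psi> y yo * Hv lt yo y * f0 yo) \<partial>M)"
    unfolding mutation_def gibbs_kernel_def
    by (rule Bochner_Integration.integral_cong) (simp_all add: assms)
  then show ?thesis unfolding evol_rhs_def hminus_def by (simp add: mult.commute)
qed

lemma entropy_le_entropy_reference:
  assumes f0_dens: "prob_density M f0" and f0_pos: "\<And>y. y \<in> space M \<Longrightarrow> 0 < f0 y"
    and g_dens: "prob_density M g"
  shows "entropy M f0 C0 g \<le> entropy M f0 C0 f0"
proof -
  \<comment> \<open>a non-integrable g ln (g / f0) has Bochner integral 0, which makes the non-integrable case trivial\<close>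
  have "0 \<le> (\<integral>y. g y * ln (g y / f0 y) \<partial>M)"
  proof (cases "integrable M (\<lambda>y. g y * ln (g y / f0 y))")
    case True
    have "0 = (\<integral>y. g y - f0 y \<partial>M)"
      using f0_dens g_dens by (simp add: prob_density_def)
    also have "\<dots> \<le> (\<integral>y. g y * ln (g y / f0 y) \<partial>M)"
      using f0_dens g_dens f0_pos True
      by (intro Bochner_Integration.integral_mono diff_le_mult_ln_div) (auto simp: prob_density_def)
    finally show ?thesis .
  qed (simp add: not_integrable_integral_eq)
  moreover have "(\<lambda>y. f0 y * ln (f0 y / f0 y)) = (\<lambda>y. 0)"
    by (rule ext) (metis div_self ln_one mult_zero_left mult_zero_right)
  ultimately show ?thesis unfolding entropy_def by simp
qed

theorem theorem1:
  fixes M :: "'a measure"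
    and lt :: "'a \<Rightarrow> 'a \<Rightarrow> bool"
    and \<Psi> :: "'a \<Rightarrow> 'a \<Rightarrow> real"
    and f0 :: "'a \<Rightarrow> real"
    and C0 \<gamma> :: real
    and T :: "real set"
    and f :: "real \<Rightarrow> 'a \<Rightarrow> real"
  assumes sfin: "sigma_finite_measure M"
    and lt_asym: "\<And>y y'. y \<in> space M \<Longrightarrow> y' \<in> space M \<Longrightarrow> \<not> (lt y y' \<and> lt y' y)"
    and lt_meas: "{p \<in> space (M \<Otimes>\<^sub>M M). lt (fst p) (snd p)} \<in> sets (M \<Otimes>\<^sub>M M)"
    and Psi_meas: "(\<lambda>p. \<Psi> (fst p) (snd p)) \<in> borel_measurable (M \<Otimes>\<^sub>M M)"
    and Psi_range: "\<And>y y'. y \<in> space M \<Longrightarrow> y' \<in> space M \<Longrightarrow> 0 \<le> \<Psi> y y' \<and> \<Psi> y y' \<le> 1"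
    and Psi_sym: "\<And>y y'. y \<in> space M \<Longrightarrow> y' \<in> space M \<Longrightarrow> \<Psi> y y' = \<Psi> y' y"
    and f0_dens: "prob_density M f0"
    and f0_pos: "\<And>y. y \<in> space M \<Longrightarrow> 0 < f0 y"
    and h0_pos: "\<And>y. y \<in> space M \<Longrightarrow> 0 < hplus M \<Psi> lt f0 y"
    and gamma_pos: "0 < \<gamma>"
    and T_open: "open T" and T_int: "is_interval T"
    and f_dens: "\<And>t. t \<in> T \<Longrightarrow> prob_density M (f t)"
    and f_pos: "\<And>t y. t \<in> T \<Longrightarrow> y \<in> space M \<Longrightarrow> 0 < f t y"
    and f_evol: "\<And>t y. t \<in> T \<Longrightarrow> y \<in> space M \<Longrightarrow>
        ((\<lambda>s. f s y) has_real_derivative evol_rhs M \<Psi> lt f0 \<gamma> (f t) y) (at t)"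
    and f_entr_int: "\<And>t. t \<in> T \<Longrightarrow> integrable M (\<lambda>y. f t y * ln (f t y / f0 y))"
    and f_dom: "\<And>t. t \<in> T \<Longrightarrow> \<exists>e>0. \<exists>g. integrable M g \<and>
        (\<forall>s\<in>T. \<bar>s - t\<bar> < e \<longrightarrow> (\<forall>y\<in>space M.
           \<bar>evol_rhs M \<Psi> lt f0 \<gamma> (f s) y * (ln (f s y / f0 y) + 1)\<bar> \<le> g y))"
  shows "(\<forall>t\<in>T. \<exists>D. ((\<lambda>s. entropy M f0 C0 (f s)) has_real_derivative D) (at t) \<and> 0 \<le> D)
       \<and> mono_on T (\<lambda>s. entropy M f0 C0 (f s))
       \<and> (\<forall>g. prob_density M g \<longrightarrow> entropy M f0 C0 g \<le> entropy M f0 C0 f0)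
       \<and> (\<forall>y\<in>space M. evol_rhs M \<Psi> lt f0 \<gamma> f0 y = 0)"
proof -
  interpret gibbs_mutation M lt \<Psi> f0
    by (rule gibbs_mutation.intro) fact+
  have entropy_deriv: "\<exists>D. ((\<lambda>s. entropy M f0 C0 (f s)) has_real_derivative D) (at t) \<and> 0 \<le> D"
    if t: "t \<in> T" for t
  proof -
    obtain e g where e: "0 < e" and g: "integrable M g"
      and dom: "\<forall>s\<in>T. \<bar>s - t\<bar> < e \<longrightarrow> (\<forall>y\<in>space M.
           \<bar>evol_rhs M \<Psi> lt f0 \<gamma> (f s) y * (ln (f s y / f0 y) + 1)\<bar> \<le> g y)"
      using f_dom[OF t] by blast
    show ?thesis
      by (rule entropy_has_nonneg_derivative[OF gamma_pos T_open t f_dens f_pos f_evol f_entr_int e g])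
         (use dom in auto)
  qed
  then have "mono_on T (\<lambda>s. entropy M f0 C0 (f s))"
    using T_int by (intro mono_on_if_deriv_nonneg)
  then show ?thesis
    using entropy_deriv entropy_le_entropy_reference[OF f0_dens f0_pos]
      evol_rhs_reference_eq_0[of M \<Psi> lt f0] h0_pos
    by (auto simp: less_imp_neq[symmetric])
qed

end
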